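(* Let $\mathcal U\subseteq\mathbb R^m$ be nonempty with $\underline{\dim}_{\mathrm{MB}}(\mathcal U)<n$, where $n\le m$. Then $\ker(\mathbf A)\cap(\mathcal U\setminus\{\mathbf 0\})=\emptyset$ for $\lambda^{n\times m}$-almost all $\mathbf A\in\mathbb R^{n\times m}$.
   Context: For nonempty $\mathcal{U}\subseteq\mathbb{R}^m$ and $\rho>0$, $N_{\mathcal U}(\rho)$ denotes the smallest number of open Euclidean balls of radius $\rho$ covering $\mathcal U$ ($=\infty$ if no finite cover exists). The lower Minkowski dimension is $\underline{\dim}_{\mathrm B}(\mathcal U)=\liminf_{\rho\to0}\frac{\log N_{\mathcal U}(\rho)}{\log(1/\rho)}$. The lower modified Minkowski dimension is $\underline{\dim}_{\mathrm{MB}}(\mathcal U)=\inf\{\sup_{i\in\mathbb N}\underline{\dim}_{\mathrm B}(\mathcal U_i):\mathcal U\subseteq\bigcup_{i\in\mathbb N}\mathcal U_i\}$, the infimum taken over all countable covers of $\mathcal U$ by nonempty bounded sets $\mathcal U_i$. $\lambda^{n\times m}$ is Lebesgue measure on $\mathbb R^{n\times m}$. *)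

theory Defs
  imports "HOL-Analysis.Analysis"
begin

text \<open>Covering number: smallest number of open balls of radius rho covering U
  (infinity if no finite cover exists).\<close>
definition covering_number :: "'a::metric_space set \<Rightarrow> real \<Rightarrow> enat" where
  "covering_number U \<rho> =
     Inf {enat (card C) | C. finite C \<and> U \<subseteq> (\<Union>c\<in>C. ball c \<rho>)}"

definition lower_box_dim :: "'a::metric_space set \<Rightarrow> ereal" where
  "lower_box_dim U = Liminf (at_right 0)
     (\<lambda>\<rho>. case covering_number U \<rho> of
              enat k \<Rightarrow> ereal (ln (real k) / ln (1 / \<rho>))
            | \<infinity> \<Rightarrow> \<infinity>)"

definition lower_mod_box_dim :: "'a::metric_space set \<Rightarrow> ereal" where
  "lower_mod_box_dim U = Inf {(SUP i. lower_box_dim (V i)) | V :: nat \<Rightarrow> 'a set.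
      (\<forall>i. V i \<noteq> {} \<and> bounded (V i)) \<and> U \<subseteq> (\<Union>i. V i)}"

end

theory Submission
  imports Defs
begin

text \<open>Cover \<open>U\<close> by countably many bounded pieces \<open>W\<close> of lower box dimension \<open>< n\<close>. Fix \<open>W\<close>,
  a lower bound \<open>\<delta>\<close> for \<open>\<parallel>x\<parallel>\<close> and a bound \<open>t\<close> for the entries of \<open>A\<close>. For arbitrarily small
  \<open>\<rho>\<close>, \<open>W\<close> is covered by \<open>k \<le> \<rho>\<^sup>-\<^sup>s\<close> balls of radius \<open>\<rho>\<close> with \<open>s < n\<close>. If \<open>A x = 0\<close> with \<open>x\<close> in the
  ball around \<open>c\<close>, then \<open>A c\<close> is within \<open>m t \<rho>\<close> of \<open>0\<close> in every coordinate; as some coordinate of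
  \<open>c\<close> is at least of order \<open>\<delta>\<close>, disjoint translates of this slab of matrices along the
  corresponding column pack into a fixed cube, so the slab has measure \<open>O(\<rho>\<^sup>n)\<close>. Summing over
  the centres gives \<open>O(\<rho>\<^sup>n\<^sup>-\<^sup>s) \<rightarrow> 0\<close>, and a countable union over \<open>W\<close>, \<open>\<delta>\<close> and \<open>t\<close> exhausts all
  matrices with a nonzero kernel vector in \<open>U\<close>.\<close>

definition matrix_cube :: "real \<Rightarrow> (real^'m^'n) set" where
  "matrix_cube t = {A. \<forall>i j. \<bar>A$i$j\<bar> \<le> t}"

definition matrix_slab :: "real \<Rightarrow> real^'m \<Rightarrow> real \<Rightarrow> (real^'m^'n) set" where
  "matrix_slab t c e = {A \<in> matrix_cube t. \<forall>i. \<bar>(A *v c)$i\<bar> \<le> e}"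

lemma matrix_slab_subset_cube: "matrix_slab t c e \<subseteq> matrix_cube t"
  by (simp add: matrix_slab_def)

lemma matrix_cube_nonneg: "A \<in> matrix_cube t \<Longrightarrow> 0 \<le> t"
  by (auto simp: matrix_cube_def intro: order_trans[OF abs_ge_zero])

lemma abs_matrix_vector_mult_nth_le:
  fixes A :: "real^'m^'n"
  assumes "A \<in> matrix_cube t"
  shows "\<bar>(A *v y)$i\<bar> \<le> real CARD('m) * t * norm y"
proof -
  have "0 \<le> t" using assms by (rule matrix_cube_nonneg)
  have "\<bar>(A *v y)$i\<bar> \<le> (\<Sum>j\<in>UNIV. \<bar>A$i$j\<bar> * \<bar>y$j\<bar>)"
    unfolding matrix_vector_mult_def vec_lambda_beta abs_mult[symmetric] by (rule sum_abs)
  also have "\<dots> \<le> (\<Sum>j\<in>(UNIV::'m set). t * norm y)"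
    using assms \<open>0 \<le> t\<close>
    by (intro sum_mono mult_mono) (auto simp: matrix_cube_def component_le_norm_cart)
  finally show ?thesis by simp
qed

lemma bounded_matrix_cube: "bounded (matrix_cube t :: (real^'m^'n) set)"
proof -
  have "norm A \<le> real CARD('n) * (real CARD('m) * t)" if "A \<in> matrix_cube t" for A :: "real^'m^'n"
  proof -
    have "norm (A$i) \<le> real CARD('m) * t" for i
    proof -
      have "norm (A$i) \<le> (\<Sum>j\<in>UNIV. \<bar>A$i$j\<bar>)" by (rule norm_le_l1_cart)
      also have "\<dots> \<le> (\<Sum>j\<in>(UNIV::'m set). t)"
        using that by (intro sum_mono) (auto simp: matrix_cube_def)
      finally show ?thesis by simp
    qed
    then have "(\<Sum>i\<in>UNIV. norm (A$i)) \<le> (\<Sum>i\<in>(UNIV::'n set). real CARD('m) * t)"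
      by (intro sum_mono)
    moreover have "norm A \<le> (\<Sum>i\<in>UNIV. norm (A$i))"
      unfolding norm_vec_def by (rule L2_set_le_sum) auto
    ultimately show ?thesis by simp
  qed
  then show ?thesis by (auto simp: bounded_iff)
qed

lemma closed_matrix_slab: "closed (matrix_slab t c e :: (real^'m^'n) set)"
  unfolding matrix_slab_def matrix_cube_def matrix_vector_mult_def mem_Collect_eq
  by (intro closed_Collect_conj closed_Collect_all closed_Collect_le continuous_intros)

lemma matrix_slab_lmeasurable: "matrix_slab t c e \<in> lmeasurable"
  by (intro lmeasurable_compact compact_eq_bounded_closed[THEN iffD2] conjI
      closed_matrix_slab bounded_subset[OF bounded_matrix_cube matrix_slab_subset_cube])

lemma matrix_cube_lmeasurable: "(matrix_cube t :: (real^'m^'n) set) \<in> lmeasurable"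
proof -
  have "matrix_cube t = (matrix_slab t 0 0 :: (real^'m^'n) set)"
    by (simp add: matrix_slab_def)
  then show ?thesis using matrix_slab_lmeasurable[of t 0 0] by simp
qed

lemma card_mult_measure_le_if_disjoint_translates:
  fixes S B :: "'a::euclidean_space set"
  assumes "S \<in> lmeasurable" "B \<in> lmeasurable" "finite I"
    and disjoint: "pairwise (\<lambda>k k'. (+) (v k) ` S \<inter> (+) (v k') ` S = {}) I"
    and inside: "\<And>k. k \<in> I \<Longrightarrow> (+) (v k) ` S \<subseteq> B"
  shows "card I * measure lebesgue S \<le> measure lebesgue B"
proof -
  have "card I * measure lebesgue S = (\<Sum>k\<in>I. measure lebesgue ((+) (v k) ` S))"
    by (simp add: measure_translation)
  also have "\<dots> = measure lebesgue (\<Union>k\<in>I. (+) (v k) ` S)"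
    using assms(1,3) disjoint
    by (intro measure_negligible_finite_Union_image[symmetric] measurable_translation)
       (auto simp: pairwise_def)
  also have "\<dots> \<le> measure lebesgue B"
    using assms(1-3) inside
    by (intro measure_mono_fmeasurable) (auto intro!: sets.finite_UN fmeasurableD measurable_translation)
  finally show ?thesis .
qed

definition column_shift :: "'m \<Rightarrow> real \<Rightarrow> ('n \<Rightarrow> nat) \<Rightarrow> real^'m^'n" where
  "column_shift j h k = (\<chi> i j'. if j' = j then h * real (k i) else 0)"

lemma column_shift_mult_nth: "(column_shift j h k *v c)$i = h * real (k i) * c$j"
  by (simp add: column_shift_def matrix_vector_mult_def if_distrib[of "\<lambda>x. x * _"] sum.delta
      cong: if_cong)

lemma translate_matrix_cube_subset:
  fixes B :: "real^'m^'n"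
  assumes "B \<in> matrix_cube 1"
  shows "(+) B ` matrix_cube t \<subseteq> matrix_cube (t + 1)"
proof clarify
  fix A :: "real^'m^'n" assume "A \<in> matrix_cube t"
  have "\<bar>(B + A)$i$j\<bar> \<le> t + 1" for i j
  proof -
    have "\<bar>B$i$j\<bar> \<le> 1" "\<bar>A$i$j\<bar> \<le> t"
      using assms \<open>A \<in> matrix_cube t\<close> by (simp_all add: matrix_cube_def)
    moreover have "\<bar>(B + A)$i$j\<bar> \<le> \<bar>B$i$j\<bar> + \<bar>A$i$j\<bar>" by (simp add: abs_triangle_ineq)
    ultimately show ?thesis by linarith
  qed
  then show "B + A \<in> matrix_cube (t + 1)" by (simp add: matrix_cube_def)
qed

lemma disjoint_translates_matrix_slab:
  assumes e: "e > 0" and far: "3 * e \<le> h * \<bar>c$j\<bar>" and "k i \<noteq> k' i"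
  shows "(+) (column_shift j h k) ` matrix_slab t c e \<inter> (+) (column_shift j h k') ` matrix_slab t c e = {}"
proof (rule equals0I)
  fix B assume "B \<in> (+) (column_shift j h k) ` matrix_slab t c e \<inter> (+) (column_shift j h k') ` matrix_slab t c e"
  then obtain A A' where A: "A \<in> matrix_slab t c e" and A': "A' \<in> matrix_slab t c e"
    and "column_shift j h k + A = column_shift j h k' + A'" by auto
  then have "((column_shift j h k + A) *v c)$i = ((column_shift j h k' + A') *v c)$i" by simp
  then have "h * (real (k' i) - real (k i)) * c$j = (A *v c)$i - (A' *v c)$i"
    by (simp add: matrix_vector_mult_add_rdistrib column_shift_mult_nth algebra_simps)
  moreover have "\<bar>(A *v c)$i\<bar> \<le> e" "\<bar>(A' *v c)$i\<bar> \<le> e"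
    using A A' by (auto simp: matrix_slab_def)
  ultimately have "\<bar>h * (real (k' i) - real (k i)) * c$j\<bar> \<le> 2 * e"
    by (simp only:)
  moreover have "h * \<bar>c$j\<bar> \<le> \<bar>h * (real (k' i) - real (k i)) * c$j\<bar>"
  proof -
    have "0 < h * \<bar>c$j\<bar>" using e far by linarith
    then have "0 \<le> h" by (auto simp: zero_less_mult_iff)
    moreover have "1 \<le> \<bar>real (k' i) - real (k i)\<bar>" using \<open>k i \<noteq> k' i\<close> by linarith
    ultimately show ?thesis
      using mult_right_mono[of 1 "\<bar>real (k' i) - real (k i)\<bar>" "h * \<bar>c$j\<bar>"]
      by (simp add: abs_mult mult_ac)
  qed
  ultimately show False using e far by linarith
qed

text \<open>Packing argument: the \<open>K\<^sup>n\<close> translates of the slab by the column shifts \<open>k/K\<close>,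
  \<open>k \<in> {0..<K}\<^sup>n\<close>, are pairwise disjoint and stay inside the cube of side \<open>t + 1\<close>.\<close>

lemma packing_matrix_slab:
  fixes c :: "real^'m" and K :: nat
  assumes e: "e > 0" and c: "\<bar>c$j\<bar> \<ge> r" and K: "real K * (3 * e) \<le> r"
  shows "real K ^ CARD('n) * measure lebesgue (matrix_slab t c e :: (real^'m^'n) set)
           \<le> measure lebesgue (matrix_cube (t + 1) :: (real^'m^'n) set)"
proof (cases "K = 0")
  case False
  define I where "I = PiE (UNIV::'n set) (\<lambda>_. {..<K})"
  have "card I * measure lebesgue (matrix_slab t c e :: (real^'m^'n) set)
          \<le> measure lebesgue (matrix_cube (t + 1) :: (real^'m^'n) set)"
  proof (rule card_mult_measure_le_if_disjoint_translates[where v = "column_shift j (1 / real K)"])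
    have "3 * e \<le> 1 / real K * \<bar>c$j\<bar>"
      using K c False by (simp add: field_simps)
    then show "pairwise (\<lambda>k k'. (+) (column_shift j (1 / real K) k) ` matrix_slab t c e
        \<inter> (+) (column_shift j (1 / real K) k') ` matrix_slab t c e = {}) I"
    proof (intro pairwiseI)
      fix k k' :: "'n \<Rightarrow> nat" assume "k \<noteq> k'"
      then obtain i where "k i \<noteq> k' i" by auto
      with e \<open>3 * e \<le> 1 / real K * \<bar>c$j\<bar>\<close>
      show "(+) (column_shift j (1 / real K) k) ` matrix_slab t c e
          \<inter> (+) (column_shift j (1 / real K) k') ` matrix_slab t c e = {}"
        by (rule disjoint_translates_matrix_slab)
    qed
    show "(+) (column_shift j (1 / real K) k) ` matrix_slab t c e \<subseteq> matrix_cube (t + 1)"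
      if "k \<in> I" for k
    proof -
      have "column_shift j (1 / real K) k \<in> matrix_cube 1"
        using that by (auto simp: column_shift_def matrix_cube_def I_def PiE_iff divide_le_eq_1 less_imp_le)
      then show ?thesis
        using translate_matrix_cube_subset matrix_slab_subset_cube by blast
    qed
  qed (simp_all add: I_def finite_PiE matrix_slab_lmeasurable matrix_cube_lmeasurable)
  moreover have "card I = K ^ CARD('n)" by (simp add: I_def card_PiE)
  ultimately show ?thesis by simp
qed (simp add: power_0_left)

lemma measure_matrix_slab_le:
  fixes c :: "real^'m"
  assumes e: "e > 0" and r: "r > 0" and c: "\<bar>c$j\<bar> \<ge> r"
  shows "measure lebesgue (matrix_slab t c e :: (real^'m^'n) set)
           \<le> measure lebesgue (matrix_cube (t + 1) :: (real^'m^'n) set) * (6 * e / r) ^ CARD('n)"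
proof -
  define M where "M = measure lebesgue (matrix_cube (t + 1) :: (real^'m^'n) set)"
  have "M \<ge> 0" by (simp add: M_def)
  define K where "K = nat \<lfloor>r / (3 * e)\<rfloor>"
  have K: "real K \<le> r / (3 * e)" "r / (3 * e) < real K + 1"
    using e r by (auto simp: K_def)
  show ?thesis
  proof (cases "K = 0")
    case True
    have "measure lebesgue (matrix_slab t c e :: (real^'m^'n) set) \<le> M"
      unfolding M_def
    proof (rule measure_mono_fmeasurable)
      show "matrix_slab t c e \<subseteq> matrix_cube (t + 1)"
        by (auto simp: matrix_slab_def matrix_cube_def intro!: add_increasing2)
    qed (auto simp: fmeasurableD matrix_slab_lmeasurable matrix_cube_lmeasurable)
    moreover have "1 \<le> (6 * e / r) ^ CARD('n)"
      using K True e r by (intro one_le_power) (simp add: field_simps)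
    then have "M * 1 \<le> M * (6 * e / r) ^ CARD('n)" using \<open>M \<ge> 0\<close> by (intro mult_left_mono)
    with \<open>measure lebesgue (matrix_slab t c e :: (real^'m^'n) set) \<le> M\<close> show ?thesis
      by (simp add: M_def)
  next
    case False
    have "real K ^ CARD('n) * measure lebesgue (matrix_slab t c e :: (real^'m^'n) set) \<le> M"
      unfolding M_def using K e by (intro packing_matrix_slab[OF e c]) (simp add: field_simps)
    moreover have "1 / real K \<le> 6 * e / r"
    proof -
      have "r < 3 * e * (real K + 1)" using K(2) e by (simp add: field_simps)
      also have "\<dots> \<le> 3 * e * (2 * real K)" using False e by (intro mult_left_mono) auto
      finally show ?thesis using False r by (simp add: field_simps)
    qed
    ultimately have "(real K ^ CARD('n) * measure lebesgue (matrix_slab t c e :: (real^'m^'n) set))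
        * (1 / real K) ^ CARD('n) \<le> M * (6 * e / r) ^ CARD('n)"
      using \<open>M \<ge> 0\<close> by (intro mult_mono power_mono) auto
    then show ?thesis using False by (simp add: M_def power_one_over)
  qed
qed

lemma exists_abs_nth_ge_norm_div_card:
  fixes c :: "real^'m"
  obtains j where "norm c / real CARD('m) \<le> \<bar>c$j\<bar>"
proof (rule ccontr)
  assume "\<not> thesis"
  with that have "\<bar>c$j\<bar> < norm c / real CARD('m)" for j by (meson not_le)
  then have "(\<Sum>j\<in>UNIV. \<bar>c$j\<bar>) < (\<Sum>j\<in>(UNIV::'m set). norm c / real CARD('m))"
    by (intro sum_strict_mono) auto
  with norm_le_l1_cart[of c] show False by simp
qed

lemma covering_number_enatE:
  assumes "covering_number U \<rho> = enat k"
  obtains C where "finite C" "card C = k" "U \<subseteq> (\<Union>c\<in>C. ball c \<rho>)"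
proof -
  define S where "S = {enat (card C) | C. finite C \<and> U \<subseteq> (\<Union>c\<in>C. ball c \<rho>)}"
  have "covering_number U \<rho> = Inf S" by (simp add: covering_number_def S_def)
  moreover from this assms have "S \<noteq> {}" by (auto simp: Inf_enat_def)
  then have "Inf S \<in> S" unfolding Inf_enat_def by (auto intro: LeastI)
  ultimately show thesis using assms that by (auto simp: S_def)
qed

lemma frequently_covering_number_le_powr:
  fixes W :: "'a::metric_space set"
  assumes "lower_box_dim W < ereal s"
  shows "\<exists>\<^sub>F \<rho> in at_right 0. \<exists>k. covering_number W \<rho> = enat k \<and> real k \<le> (1 / \<rho>) powr s"
proof -
  define f where "f \<rho> = (case covering_number W \<rho> of
      enat k \<Rightarrow> ereal (ln (real k) / ln (1 / \<rho>)) | \<infinity> \<Rightarrow> \<infinity>)" for \<rho>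
  have "\<exists>\<^sub>F \<rho> in at_right 0. f \<rho> < ereal s"
  proof (rule ccontr)
    assume "\<not> ?thesis"
    then have "\<forall>\<^sub>F \<rho> in at_right 0. ereal s \<le> f \<rho>"
      by (simp add: not_frequently not_less)
    then have "ereal s \<le> lower_box_dim W"
      unfolding lower_box_dim_def f_def by (rule Liminf_bounded)
    with assms show False by simp
  qed
  moreover have "\<forall>\<^sub>F \<rho> in at_right (0::real). 0 < \<rho> \<and> \<rho> < 1"
    by (auto simp: eventually_at_right_field intro: exI[of _ 1])
  ultimately have "\<exists>\<^sub>F \<rho> in at_right 0. (0 < \<rho> \<and> \<rho> < 1) \<and> f \<rho> < ereal s"
    by (rule frequently_eventually_conj)
  then show ?thesis
  proof (rule frequently_elim1, elim conjE)
    fix \<rho> :: real assume "0 < \<rho>" "\<rho> < 1" "f \<rho> < ereal s"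
    then obtain k where k: "covering_number W \<rho> = enat k" and "ln (real k) / ln (1 / \<rho>) < s"
      by (cases "covering_number W \<rho>") (auto simp: f_def)
    moreover have "ln (1 / \<rho>) > 0" using \<open>0 < \<rho>\<close> \<open>\<rho> < 1\<close> by simp
    ultimately have "ln (real k) < s * ln (1 / \<rho>)" by (simp add: divide_less_eq)
    have "real k \<le> (1 / \<rho>) powr s"
    proof (cases "k = 0")
      case False
      then have "real k = exp (ln (real k))" by simp
      also have "\<dots> \<le> exp (s * ln (1 / \<rho>))" using \<open>ln (real k) < s * ln (1 / \<rho>)\<close> by simp
      finally show ?thesis using \<open>0 < \<rho>\<close> by (simp add: powr_def)
    qed simp
    with k show "\<exists>k. covering_number W \<rho> = enat k \<and> real k \<le> (1 / \<rho>) powr s" by blast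
  qed
qed

lemma annihilating_matrices_subset_slabs:
  fixes W C :: "(real^'m) set"
  assumes "W \<subseteq> (\<Union>c\<in>C. ball c \<rho>)"
  shows "{A :: real^'m^'n. A \<in> matrix_cube t \<and> (\<exists>x\<in>W. \<delta> \<le> norm x \<and> A *v x = 0)}
           \<subseteq> (\<Union>c\<in>{c\<in>C. \<delta> - \<rho> \<le> norm c}. matrix_slab t c (real CARD('m) * t * \<rho>))"
proof clarify
  fix A :: "real^'m^'n" and x
  assume A: "A \<in> matrix_cube t" and "x \<in> W" "\<delta> \<le> norm x" "A *v x = 0"
  then obtain c where "c \<in> C" and xc: "norm (c - x) < \<rho>"
    using assms by (auto simp: dist_norm)
  have "\<delta> - \<rho> \<le> norm c"
    using \<open>\<delta> \<le> norm x\<close> xc norm_triangle_ineq2[of x c] by (simp add: norm_minus_commute)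
  moreover have "\<bar>(A *v c)$i\<bar> \<le> real CARD('m) * t * \<rho>" for i
  proof -
    have "A *v c = A *v (c - x)"
      using \<open>A *v x = 0\<close> by (simp add: matrix_vector_mult_diff_distrib)
    then have "\<bar>(A *v c)$i\<bar> \<le> real CARD('m) * t * norm (c - x)"
      using abs_matrix_vector_mult_nth_le[OF A] by simp
    also have "\<dots> \<le> real CARD('m) * t * \<rho>"
      using xc matrix_cube_nonneg[OF A] by (intro mult_left_mono) auto
    finally show ?thesis .
  qed
  ultimately show "A \<in> (\<Union>c\<in>{c\<in>C. \<delta> - \<rho> \<le> norm c}. matrix_slab t c (real CARD('m) * t * \<rho>))"
    using \<open>c \<in> C\<close> A by (auto simp: matrix_slab_def)
qed

lemma annihilating_matrices_measure_le:
  fixes W :: "(real^'m) set"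
  assumes k: "covering_number W \<rho> = enat k" and \<rho>: "0 < \<rho>" "2 * \<rho> \<le> \<delta>" and t: "0 < t"
  obtains T :: "(real^'m^'n) set"
  where "T \<in> lmeasurable" "{A. A \<in> matrix_cube t \<and> (\<exists>x\<in>W. \<delta> \<le> norm x \<and> A *v x = 0)} \<subseteq> T"
    and "measure lebesgue T \<le> real k * (measure lebesgue (matrix_cube (t + 1) :: (real^'m^'n) set)
           * (12 * real CARD('m) ^ 2 * t / \<delta>) ^ CARD('n)) * \<rho> ^ CARD('n)"
proof -
  obtain C where C: "finite C" "card C = k" "W \<subseteq> (\<Union>c\<in>C. ball c \<rho>)"
    using covering_number_enatE[OF k] by blast
  define C' where "C' = {c\<in>C. \<delta> - \<rho> \<le> norm c}"
  define e where "e = real CARD('m) * t * \<rho>"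
  define r where "r = \<delta> / (2 * real CARD('m))"
  define M where "M = measure lebesgue (matrix_cube (t + 1) :: (real^'m^'n) set)"
  define T where "T = (\<Union>c\<in>C'. matrix_slab t c e :: (real^'m^'n) set)"
  have "finite C'" using C(1) by (simp add: C'_def)
  have e: "e > 0" and r: "r > 0" using \<rho> t by (auto simp: e_def r_def)
  have slab: "measure lebesgue (matrix_slab t c e :: (real^'m^'n) set) \<le> M * (6 * e / r) ^ CARD('n)"
    if "c \<in> C'" for c
  proof -
    obtain j where j: "norm c / real CARD('m) \<le> \<bar>c$j\<bar>"
      by (rule exists_abs_nth_ge_norm_div_card)
    have "r \<le> norm c / real CARD('m)"
      using that \<rho> by (auto simp: r_def C'_def field_simps)
    with j show ?thesis unfolding M_def by (intro measure_matrix_slab_le[OF e r, of c j]) auto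
  qed
  have "measure lebesgue T \<le> (\<Sum>c\<in>C'. measure lebesgue (matrix_slab t c e :: (real^'m^'n) set))"
    unfolding T_def using \<open>finite C'\<close> by (intro measure_UNION_le) (auto simp: fmeasurableD matrix_slab_lmeasurable)
  also have "\<dots> \<le> card C' * (M * (6 * e / r) ^ CARD('n))"
    using sum_mono[OF slab] by simp
  also have "\<dots> \<le> k * (M * (6 * e / r) ^ CARD('n))"
    using C \<open>finite C'\<close> e r by (intro mult_right_mono) (auto simp: C'_def M_def intro: card_mono)
  also have "6 * e / r = 12 * real CARD('m) ^ 2 * t / \<delta> * \<rho>"
    by (simp add: e_def r_def power2_eq_square)
  finally have "measure lebesgue T \<le> k * (M * (12 * real CARD('m) ^ 2 * t / \<delta>) ^ CARD('n)) * \<rho> ^ CARD('n)"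
    by (simp only: power_mult_distrib mult.assoc)
  moreover have "T \<in> lmeasurable"
    unfolding T_def using \<open>finite C'\<close> by (intro fmeasurable.finite_UN matrix_slab_lmeasurable)
  moreover have "{A. A \<in> matrix_cube t \<and> (\<exists>x\<in>W. \<delta> \<le> norm x \<and> A *v x = 0)} \<subseteq> T"
    unfolding T_def C'_def e_def by (rule annihilating_matrices_subset_slabs[OF C(3)])
  ultimately show thesis using that unfolding M_def by blast
qed

lemma negligible_annihilating_matrices:
  fixes W :: "(real^'m) set"
  assumes dim: "lower_box_dim W < ereal (real CARD('n))" and \<delta>: "0 < \<delta>" and t: "0 < t"
  shows "negligible {A :: real^'m^'n. A \<in> matrix_cube t \<and> (\<exists>x\<in>W. \<delta> \<le> norm x \<and> A *v x = 0)}"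
  unfolding negligible_outer_le
proof (intro allI impI)
  fix \<eta> :: real assume "0 < \<eta>"
  obtain s where s: "lower_box_dim W < ereal s" "s < real CARD('n)"
    using ereal_dense2[OF dim] by auto
  define Q where "Q = measure lebesgue (matrix_cube (t + 1) :: (real^'m^'n) set)
                        * (12 * real CARD('m) ^ 2 * t / \<delta>) ^ CARD('n)"
  have "((\<lambda>\<rho>. Q * \<rho> powr (real CARD('n) - s)) \<longlongrightarrow> 0) (at_right 0)"
    using s(2) by (intro tendsto_mult_right_zero tendsto_zero_powrI tendsto_ident_at tendsto_const)
       (auto simp: eventually_at_right_field intro: exI[of _ 1])
  then have "\<forall>\<^sub>F \<rho> in at_right 0. Q * \<rho> powr (real CARD('n) - s) < \<eta>"
    using \<open>0 < \<eta>\<close> by (rule order_tendstoD(2))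
  moreover have "\<forall>\<^sub>F \<rho> in at_right 0. 0 < \<rho> \<and> 2 * \<rho> \<le> \<delta>"
    unfolding eventually_at_right_field using \<delta> by (intro exI[of _ "\<delta> / 2"]) auto
  ultimately have "\<exists>\<^sub>F \<rho> in at_right 0. (Q * \<rho> powr (real CARD('n) - s) < \<eta> \<and> 0 < \<rho> \<and> 2 * \<rho> \<le> \<delta>)
      \<and> (\<exists>k. covering_number W \<rho> = enat k \<and> real k \<le> (1 / \<rho>) powr s)"
    by (rule frequently_eventually_conj[OF frequently_covering_number_le_powr[OF s(1)] eventually_conj])
  then obtain \<rho> k where k: "covering_number W \<rho> = enat k" "real k \<le> (1 / \<rho>) powr s"
    and \<rho>: "Q * \<rho> powr (real CARD('n) - s) < \<eta>" "0 < \<rho>" "2 * \<rho> \<le> \<delta>"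
    by (auto dest: frequently_ex)
  obtain T :: "(real^'m^'n) set" where T: "T \<in> lmeasurable"
    "{A. A \<in> matrix_cube t \<and> (\<exists>x\<in>W. \<delta> \<le> norm x \<and> A *v x = 0)} \<subseteq> T"
    and measure_T: "measure lebesgue T \<le> real k * Q * \<rho> ^ CARD('n)"
    using annihilating_matrices_measure_le[OF k(1) \<rho>(2,3) t] unfolding Q_def by blast
  note measure_T
  also have "\<dots> \<le> (1 / \<rho>) powr s * Q * \<rho> ^ CARD('n)"
    using k(2) \<rho>(2) t \<delta> by (intro mult_right_mono) (auto simp: Q_def)
  also have "\<dots> = Q * \<rho> powr (real CARD('n) - s)"
    using \<rho>(2) by (simp add: powr_diff powr_divide powr_realpow)
  finally show "\<exists>T. {A :: real^'m^'n. A \<in> matrix_cube t \<and> (\<exists>x\<in>W. \<delta> \<le> norm x \<and> A *v x = 0)} \<subseteq> T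
      \<and> T \<in> lmeasurable \<and> measure lebesgue T \<le> \<eta>"
    using T \<rho>(1) by (intro exI[of _ T]) auto
qed

lemma lower_mod_box_dim_lessE:
  assumes "lower_mod_box_dim U < d"
  obtains V :: "nat \<Rightarrow> 'a::metric_space set"
  where "U \<subseteq> (\<Union>i. V i)" "\<And>i. lower_box_dim (V i) < d"
proof -
  obtain V :: "nat \<Rightarrow> 'a set" where "U \<subseteq> (\<Union>i. V i)" "(SUP i. lower_box_dim (V i)) < d"
    using assms unfolding lower_mod_box_dim_def Inf_less_iff by blast
  then show thesis using that by (meson SUP_lessD UNIV_I)
qed

lemma kernel_meets_subset_annihilating_matrices:
  fixes U :: "(real^'m) set"
  assumes "U \<subseteq> (\<Union>i. V i)"
  shows "{A :: real^'m^'n. {x. A *v x = 0} \<inter> (U - {0}) \<noteq> {}}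
    \<subseteq> (\<Union>i k T. {A. A \<in> matrix_cube (real (Suc T))
                     \<and> (\<exists>x\<in>V i. 1 / real (Suc k) \<le> norm x \<and> A *v x = 0)})"
proof
  fix A :: "real^'m^'n"
  assume "A \<in> {A. {x. A *v x = 0} \<inter> (U - {0}) \<noteq> {}}"
  then obtain x where "A *v x = 0" "x \<in> U" "x \<noteq> 0" by auto
  then obtain i where "x \<in> V i" using assms by blast
  obtain n where "0 < n" "inverse (real n) < norm x"
    using \<open>x \<noteq> 0\<close> ex_inverse_of_nat_less[of "norm x"] by auto
  then obtain k where "1 / real (Suc k) \<le> norm x"
    by (cases n) (auto simp: inverse_eq_divide simp del: of_nat_Suc intro: less_imp_le)
  have "\<bar>A$i'$j\<bar> \<le> real (Suc (nat \<lceil>norm A\<rceil>))" for i' j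
    using component_le_norm_cart[of "A$i'" j] Finite_Cartesian_Product.norm_nth_le[of A i'] real_nat_ceiling_ge[of "norm A"]
    by linarith
  then have "A \<in> matrix_cube (real (Suc (nat \<lceil>norm A\<rceil>)))"
    by (simp add: matrix_cube_def)
  with \<open>x \<in> V i\<close> \<open>1 / real (Suc k) \<le> norm x\<close> \<open>A *v x = 0\<close>
  show "A \<in> (\<Union>i k T. {A :: real^'m^'n. A \<in> matrix_cube (real (Suc T))
                     \<and> (\<exists>x\<in>V i. 1 / real (Suc k) \<le> norm x \<and> A *v x = 0)})"
    by (intro UN_I[of i UNIV] UN_I[of k UNIV] UN_I[of "nat \<lceil>norm A\<rceil>" UNIV]) auto
qed

theorem proposition1:
  fixes U :: "(real ^ 'm) set"
  assumes "U \<noteq> {}"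
    and "lower_mod_box_dim U < ereal (real CARD('n))"
    and "CARD('n) \<le> CARD('m)"
  shows "AE A in (lborel :: (real ^ 'm ^ 'n) measure).
           {x. A *v x = 0} \<inter> (U - {0}) = {}"
proof -
  obtain V :: "nat \<Rightarrow> (real^'m) set"
    where V: "U \<subseteq> (\<Union>i. V i)" "\<And>i. lower_box_dim (V i) < ereal (real CARD('n))"
    using assms(2) by (rule lower_mod_box_dim_lessE) blast
  define N where "N = (\<Union>i k T. {A :: real^'m^'n. A \<in> matrix_cube (real (Suc T))
                     \<and> (\<exists>x\<in>V i. 1 / real (Suc k) \<le> norm x \<and> A *v x = 0)})"
  have "negligible N"
    unfolding N_def
  proof (intro negligible_Union_nat)
    show "negligible {A :: real^'m^'n. A \<in> matrix_cube (real (Suc T))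
        \<and> (\<exists>x\<in>V i. 1 / real (Suc k) \<le> norm x \<and> A *v x = 0)}" for i k T
      by (rule negligible_annihilating_matrices[OF V(2)]) auto
  qed
  moreover have "{A \<in> space lebesgue. \<not> {x. A *v x = 0} \<inter> (U - {0}) = {}} \<subseteq> N"
    using kernel_meets_subset_annihilating_matrices[OF V(1)] by (simp add: N_def)
  ultimately have "AE A in (lebesgue :: (real^'m^'n) measure). {x. A *v x = 0} \<inter> (U - {0}) = {}"
    by (intro AE_I'[of N]) (simp_all add: negligible_iff_null_sets)
  then show ?thesis by (simp add: AE_completion_iff)
qed

end
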